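(* Let $p\in(1,\infty)$ be such that $\gamma_{p,w}:=\gamma\, n^{1/p}(w_{\max}/w_{\min})^{1/p}<1$, let $Q^*_\lambda$ be the unique fixed point of $F_\lambda$, and let \[\bar\theta:=\arg\min_{\theta\in\mathbb{R}^d}\|Q_\theta-Q^*_\lambda\|_{p,w},\qquad \theta^*_p:=\arg\min_{\theta\in\mathbb{R}^d}f_p(\theta),\] where $f_p(\theta)=\frac1p\|F_\lambda(\Phi\theta)-\Phi\theta\|_{p,w}^p$. Then \[ \|Q_{\bar\theta}-Q_{\theta^*_p}\|_{p,w}\le\left(1+\frac{1+\gamma_{p,w}}{1-\gamma_{p,w}}\right)\min_{\theta\in\mathbb{R}^d}\|Q_\theta-Q^*_\lambda\|_{p,w}. \]
   Context: Finite discounted MDP with state space $\mathcal S$, action space $\mathcal A$, transition probabilities $P(s'\mid s,a)$, expected reward $R(s,a)$, discount $\gamma\in[0,1)$; $n=|\mathcal S||\mathcal A|$ and Q-functions are vectors in $\mathbb{R}^n$ indexed by $(s,a)$. For $\lambda>0$, $(F_\lambda Q)(s,a) := R(s,a)+\gamma\sum_{s'}P(s'\mid s,a)\,\lambda\ln\big(\sum_{u\in\mathcal A}\exp(Q(s',u)/\lambda)\big)$. Weights $w_i>0$ with $\sum_i w_i=1$, $\|x\|_{p,w}=(\sum_i w_i|x_i|^p)^{1/p}$, $w_{\min}=\min_i w_i$, $w_{\max}=\max_i w_i$. $\Phi\in\mathbb{R}^{n\times d}$ is a full-rank feature matrix and $Q_\theta=\Phi\theta$. When $\gamma_{p,w}<1$,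 $F_\lambda$ is a contraction in $\|\cdot\|_{p,w}$ with unique fixed point $Q^*_\lambda$. *)

theory Defs
  imports "HOL-Analysis.Analysis"
begin

definition pw_norm :: "real \<Rightarrow> ('i::finite \<Rightarrow> real) \<Rightarrow> ('i \<Rightarrow> real) \<Rightarrow> real" where
  "pw_norm p w x = (\<Sum>i\<in>UNIV. w i * \<bar>x i\<bar> powr p) powr (1 / p)"

definition soft_bellman ::
  "('s::finite \<Rightarrow> 'a::finite \<Rightarrow> 's \<Rightarrow> real) \<Rightarrow> ('s \<Rightarrow> 'a \<Rightarrow> real) \<Rightarrow> real \<Rightarrow> real
    \<Rightarrow> ('s \<times> 'a \<Rightarrow> real) \<Rightarrow> ('s \<times> 'a \<Rightarrow> real)" where
  "soft_bellman P R \<gamma> lam Q = (\<lambda>(s, a). R s a + \<gamma> * (\<Sum>s'\<in>UNIV. P s a s' *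
       (lam * ln (\<Sum>u\<in>UNIV. exp (Q (s', u) / lam)))))"

definition Qlin :: "('i::finite \<Rightarrow> 'd::finite \<Rightarrow> real) \<Rightarrow> ('d \<Rightarrow> real) \<Rightarrow> ('i \<Rightarrow> real)" where
  "Qlin \<Phi> \<theta> = (\<lambda>i. \<Sum>j\<in>UNIV. \<Phi> i j * \<theta> j)"

definition gamma_pw :: "real \<Rightarrow> real \<Rightarrow> ('i::finite \<Rightarrow> real) \<Rightarrow> real" where
  "gamma_pw \<gamma> p w = \<gamma> * real CARD('i) powr (1 / p) * (Max (range w) / Min (range w)) powr (1 / p)"

definition f_p ::
  "('s::finite \<Rightarrow> 'a::finite \<Rightarrow> 's \<Rightarrow> real) \<Rightarrow> ('s \<Rightarrow> 'a \<Rightarrow> real) \<Rightarrow> real \<Rightarrow> real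
    \<Rightarrow> real \<Rightarrow> ('s \<times> 'a \<Rightarrow> real) \<Rightarrow> ('s \<times> 'a \<Rightarrow> 'd::finite \<Rightarrow> real) \<Rightarrow> ('d \<Rightarrow> real) \<Rightarrow> real" where
  "f_p P R \<gamma> lam p w \<Phi> \<theta> =
     (1 / p) * pw_norm p w (\<lambda>i. soft_bellman P R \<gamma> lam (Qlin \<Phi> \<theta>) i - Qlin \<Phi> \<theta> i) powr p"

end

theory Submission
  imports Defs
begin

text \<open>The soft Bellman operator is a gamma-contraction in the sup-norm, since log-sum-exp is
  1-Lipschitz there, and hence a gamma_pw-contraction in the weighted p-norm. For any contraction F
  with fixed point Q*, the triangle inequality pins the Bellman residual |F Q - Q| between
  (1 - gamma_pw) |Q - Q*| and (1 + gamma_pw) |Q - Q*|. Since theta_p minimises the residual,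
  |Q_theta_p - Q*| <= (1 + gamma_pw) / (1 - gamma_pw) |Q_theta_bar - Q*|, and the triangle
  inequality through Q* gives the claim.\<close>

lemma convex_on_powr_nonneg:
  fixes p :: real
  assumes "1 \<le> p"
  shows "convex_on {0..} (\<lambda>x. x powr p)"
proof (rule convex_on_linorderI)
  fix t x y :: real
  assume t: "0 < t" "t < 1" and xy: "x \<in> {0..}" "y \<in> {0..}" "x < y"
  show "((1 - t) *\<^sub>R x + t *\<^sub>R y) powr p \<le> (1 - t) * x powr p + t * y powr p"
  proof (cases "x = 0")
    case True
    have "t powr p \<le> t powr 1"
      using t assms by (intro powr_mono') auto
    then have "(t * y) powr p \<le> t * y powr p"
      using t xy by (simp add: powr_mult mult_right_mono)
    then show ?thesis using True by simp
  next
    case False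
    then show ?thesis
      using convex_onD[OF powr_convex[OF assms], of t x y] t xy by simp
  qed
qed simp

lemma powr_le_cancel2:
  fixes x y a :: real
  assumes "0 < a" "0 \<le> y" "x powr a \<le> y powr a"
  shows "x \<le> y"
  using assms powr_less_mono2[of a y x] by fastforce

subsection \<open>The weighted p-norm\<close>

lemma pw_norm_nonneg: "0 \<le> pw_norm p w x"
  by (simp add: pw_norm_def)

lemma pw_norm_powr:
  fixes w x :: "'i::finite \<Rightarrow> real"
  assumes "\<And>i. w i > 0" "p > 0"
  shows "pw_norm p w x powr p = (\<Sum>i\<in>UNIV. w i * \<bar>x i\<bar> powr p)"
proof -
  have "0 \<le> (\<Sum>i\<in>UNIV. w i * \<bar>x i\<bar> powr p)"
    using assms(1) by (intro sum_nonneg) (simp add: less_imp_le)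
  then show ?thesis
    using assms(2) by (simp add: pw_norm_def powr_powr)
qed

lemma pw_norm_eq_0_iff:
  fixes w x :: "'i::finite \<Rightarrow> real"
  assumes "\<And>i. w i > 0"
  shows "pw_norm p w x = 0 \<longleftrightarrow> x = (\<lambda>i. 0)"
proof
  assume "pw_norm p w x = 0"
  then have "(\<Sum>i\<in>UNIV. w i * \<bar>x i\<bar> powr p) = 0"
    by (simp add: pw_norm_def)
  moreover have "\<forall>i\<in>UNIV. 0 \<le> w i * \<bar>x i\<bar> powr p"
    using assms by (simp add: less_imp_le)
  ultimately have "\<forall>i. w i * \<bar>x i\<bar> powr p = 0"
    by (simp add: sum_nonneg_eq_0_iff)
  then show "x = (\<lambda>i. 0)"
    using assms by (auto intro!: ext simp: less_imp_neq[symmetric])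
qed (simp add: pw_norm_def)

lemma pw_norm_minus_commute:
  "pw_norm p w (\<lambda>i. x i - y i) = pw_norm p w (\<lambda>i. y i - x i)"
  unfolding pw_norm_def by (simp add: abs_minus_commute)

lemma pw_norm_mono:
  fixes w x y :: "'i::finite \<Rightarrow> real"
  assumes w: "\<And>i. w i > 0" and p: "0 < p" and le: "\<And>i. \<bar>x i\<bar> \<le> \<bar>y i\<bar>"
  shows "pw_norm p w x \<le> pw_norm p w y"
  unfolding pw_norm_def
  using w le p by (intro powr_mono2 sum_mono sum_nonneg mult_left_mono) (auto simp: less_imp_le)

lemma pw_norm_const:
  fixes w :: "'i::finite \<Rightarrow> real"
  assumes "(\<Sum>i\<in>UNIV. w i) = 1" "0 < p" "0 \<le> c"
  shows "pw_norm p w (\<lambda>i. c) = c"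
  using assms by (simp add: pw_norm_def powr_powr sum_distrib_right[symmetric])

lemma pw_norm_le_uniform_bound:
  fixes w x :: "'i::finite \<Rightarrow> real"
  assumes "\<And>i. w i > 0" "(\<Sum>i\<in>UNIV. w i) = 1" "0 < p" "\<And>i. \<bar>x i\<bar> \<le> K"
  shows "pw_norm p w x \<le> K"
proof -
  have "0 \<le> K" using assms(4) abs_ge_zero order_trans by blast
  have "pw_norm p w x \<le> pw_norm p w (\<lambda>i. K)"
    using assms \<open>0 \<le> K\<close> by (intro pw_norm_mono) auto
  also have "\<dots> = K"
    using assms \<open>0 \<le> K\<close> by (intro pw_norm_const)
  finally show ?thesis .
qed

lemma abs_le_pw_norm:
  fixes w x :: "'i::finite \<Rightarrow> real"
  assumes w: "\<And>i. w i > 0" and p: "0 < p"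
  shows "\<bar>x j\<bar> \<le> pw_norm p w x * (1 / Min (range w)) powr (1 / p)"
proof -
  define m where "m = Min (range w)"
  have m: "0 < m" "m \<le> w j"
    using w by (auto simp: m_def)
  have "m * \<bar>x j\<bar> powr p \<le> w j * \<bar>x j\<bar> powr p"
    using m by (intro mult_right_mono) auto
  also have "\<dots> \<le> (\<Sum>i\<in>UNIV. w i * \<bar>x i\<bar> powr p)"
    using w by (intro member_le_sum) (auto simp: less_imp_le)
  also have "\<dots> = pw_norm p w x powr p"
    using w p by (rule pw_norm_powr[symmetric])
  finally have "\<bar>x j\<bar> powr p \<le> pw_norm p w x powr p * (1 / m)"
    using m by (simp add: field_simps)
  then have "(\<bar>x j\<bar> powr p) powr (1 / p) \<le> (pw_norm p w x powr p * (1 / m)) powr (1 / p)"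
    using p by (intro powr_mono2) auto
  also have "\<dots> = pw_norm p w x * (1 / m) powr (1 / p)"
    by (subst powr_mult) (use p m in \<open>auto simp: powr_powr pw_norm_nonneg\<close>)
  finally show ?thesis
    using p by (simp add: powr_powr m_def)
qed

text \<open>Minkowski's inequality: with \<open>A\<close>, \<open>B\<close> the norms of \<open>x\<close>, \<open>y\<close>, the vector \<open>(x + y) / (A + B)\<close>
  is the convex combination of the unit vectors \<open>x / A\<close> and \<open>y / B\<close> with weights \<open>A / (A + B)\<close>
  and \<open>B / (A + B)\<close>, so convexity of \<open>t powr p\<close> bounds its \<open>p\<close>-th power sum by \<open>1\<close>.\<close>

lemma pw_norm_triangle:
  fixes w x y :: "'i::finite \<Rightarrow> real"
  assumes w: "\<And>i. w i > 0" and p: "1 \<le> p"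
  shows "pw_norm p w (\<lambda>i. x i + y i) \<le> pw_norm p w x + pw_norm p w y"
proof (cases "pw_norm p w x = 0 \<or> pw_norm p w y = 0")
  case True
  then show ?thesis
    using pw_norm_eq_0_iff[where w = w, OF w] by (auto simp: pw_norm_nonneg)
next
  case False
  define A B where "A = pw_norm p w x" and "B = pw_norm p w y"
  have A: "A > 0" and B: "B > 0"
    using False pw_norm_nonneg unfolding A_def B_def by (metis less_eq_real_def)+
  define t where "t = B / (A + B)"
  have t: "0 \<le> t" "t \<le> 1" "1 - t = A / (A + B)"
    using A B by (auto simp: t_def field_simps)
  have pointwise: "(\<bar>x i + y i\<bar> / (A + B)) powr p
      \<le> (1 - t) * (\<bar>x i\<bar> / A) powr p + t * (\<bar>y i\<bar> / B) powr p" for i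
  proof -
    have "(1 - t) * (\<bar>x i\<bar> / A) + t * (\<bar>y i\<bar> / B) = (\<bar>x i\<bar> + \<bar>y i\<bar>) / (A + B)"
      unfolding t(3) using A B by (simp add: t_def add_divide_distrib)
    then have "\<bar>x i + y i\<bar> / (A + B) \<le> (1 - t) * (\<bar>x i\<bar> / A) + t * (\<bar>y i\<bar> / B)"
      using A B abs_triangle_ineq[of "x i" "y i"] by (simp add: divide_right_mono)
    moreover have "0 \<le> \<bar>x i + y i\<bar> / (A + B)"
      using A B by simp
    ultimately have "(\<bar>x i + y i\<bar> / (A + B)) powr p \<le> ((1 - t) * (\<bar>x i\<bar> / A) + t * (\<bar>y i\<bar> / B)) powr p"
      using p by (intro powr_mono2) simp_all
    also have "\<dots> \<le> (1 - t) * (\<bar>x i\<bar> / A) powr p + t * (\<bar>y i\<bar> / B) powr p"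
      using convex_onD[OF convex_on_powr_nonneg[OF p], of t "\<bar>x i\<bar> / A" "\<bar>y i\<bar> / B"] A B t
      by simp
    finally show ?thesis .
  qed
  have "(\<Sum>i\<in>UNIV. w i * \<bar>x i + y i\<bar> powr p) / (A + B) powr p
      = (\<Sum>i\<in>UNIV. w i * (\<bar>x i + y i\<bar> / (A + B)) powr p)"
    using A B by (simp add: powr_divide sum_divide_distrib)
  also have "\<dots> \<le> (\<Sum>i\<in>UNIV. w i * ((1 - t) * (\<bar>x i\<bar> / A) powr p + t * (\<bar>y i\<bar> / B) powr p))"
    using w pointwise by (intro sum_mono mult_left_mono) (auto simp: less_imp_le)
  also have "\<dots> = (1 - t) * (pw_norm p w x powr p / A powr p) + t * (pw_norm p w y powr p / B powr p)"
    using A B p by (simp add: pw_norm_powr[where w = w, OF w] powr_divide sum_distrib_left sum_divide_distrib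
        sum.distrib algebra_simps)
  also have "\<dots> = 1"
    using A B by (simp add: A_def[symmetric] B_def[symmetric])
  finally have "(\<Sum>i\<in>UNIV. w i * \<bar>x i + y i\<bar> powr p) \<le> (A + B) powr p"
    using A B by (simp add: divide_le_eq)
  then have "pw_norm p w (\<lambda>i. x i + y i) powr p \<le> (A + B) powr p"
    using p by (simp add: pw_norm_powr[where w = w, OF w])
  then show ?thesis
    using A B p unfolding A_def B_def by (rule_tac powr_le_cancel2[of p]) auto
qed

lemma pw_norm_diff_triangle:
  fixes w x y z :: "'i::finite \<Rightarrow> real"
  assumes "\<And>i. w i > 0" "1 \<le> p"
  shows "pw_norm p w (\<lambda>i. x i - z i) \<le> pw_norm p w (\<lambda>i. x i - y i) + pw_norm p w (\<lambda>i. y i - z i)"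
  using pw_norm_triangle[where x = "\<lambda>i. x i - y i" and y = "\<lambda>i. y i - z i", OF assms] by simp

subsection \<open>The soft Bellman operator\<close>

definition log_sum_exp :: "real \<Rightarrow> ('u::finite \<Rightarrow> real) \<Rightarrow> real" where
  "log_sum_exp lam v = lam * ln (\<Sum>u\<in>UNIV. exp (v u / lam))"

lemma soft_bellman_apply:
  "soft_bellman P R \<gamma> lam Q (s, a)
     = R s a + \<gamma> * (\<Sum>s'\<in>UNIV. P s a s' * log_sum_exp lam (\<lambda>u. Q (s', u)))"
  by (simp add: soft_bellman_def log_sum_exp_def)

lemma log_sum_exp_le_shift:
  fixes a b :: "'u::finite \<Rightarrow> real"
  assumes lam: "lam > 0" and le: "\<And>u. a u \<le> b u + K"
  shows "log_sum_exp lam a \<le> log_sum_exp lam b + K"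
proof -
  have pos: "0 < (\<Sum>u\<in>UNIV. exp (b u / lam))"
    by (intro sum_pos) auto
  have "(\<Sum>u\<in>UNIV. exp (a u / lam)) \<le> (\<Sum>u\<in>UNIV. exp ((b u + K) / lam))"
    using le lam by (intro sum_mono) (simp add: divide_right_mono)
  also have "\<dots> = exp (K / lam) * (\<Sum>u\<in>UNIV. exp (b u / lam))"
    by (simp add: sum_distrib_left add_divide_distrib exp_add mult.commute)
  finally have "ln (\<Sum>u\<in>UNIV. exp (a u / lam)) \<le> ln (exp (K / lam) * (\<Sum>u\<in>UNIV. exp (b u / lam)))"
    using pos by (subst ln_le_cancel_iff) (auto intro: sum_pos)
  also have "\<dots> = K / lam + ln (\<Sum>u\<in>UNIV. exp (b u / lam))"
    using pos by (simp add: ln_mult)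
  finally show ?thesis
    using lam unfolding log_sum_exp_def by (simp add: field_simps)
qed

lemma log_sum_exp_dist_le:
  fixes a b :: "'u::finite \<Rightarrow> real"
  assumes "lam > 0" and "\<And>u. \<bar>a u - b u\<bar> \<le> K"
  shows "\<bar>log_sum_exp lam a - log_sum_exp lam b\<bar> \<le> K"
proof -
  have "a u \<le> b u + K" "b u \<le> a u + K" for u
    using assms(2)[of u] by auto
  then show ?thesis
    using log_sum_exp_le_shift[OF assms(1), of a b K] log_sum_exp_le_shift[OF assms(1), of b a K]
    by (simp add: abs_le_iff)
qed

lemma soft_bellman_dist_le:
  fixes P :: "'s::finite \<Rightarrow> 'a::finite \<Rightarrow> 's \<Rightarrow> real"
  assumes P_nonneg: "\<And>s a s'. P s a s' \<ge> 0"
    and P_sum: "\<And>s a. (\<Sum>s'\<in>UNIV. P s a s') = 1"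
    and "0 \<le> \<gamma>" and "lam > 0"
    and K: "\<And>i. \<bar>Q1 i - Q2 i\<bar> \<le> K"
  shows "\<bar>soft_bellman P R \<gamma> lam Q1 i - soft_bellman P R \<gamma> lam Q2 i\<bar> \<le> \<gamma> * K"
proof -
  obtain s a where i: "i = (s, a)"
    by fastforce
  define L where "L Q s' = log_sum_exp lam (\<lambda>u. Q (s', u))" for Q :: "'s \<times> 'a \<Rightarrow> real" and s'
  have L: "\<bar>L Q1 s' - L Q2 s'\<bar> \<le> K" for s'
    unfolding L_def using assms by (intro log_sum_exp_dist_le) auto
  have diff: "soft_bellman P R \<gamma> lam Q1 i - soft_bellman P R \<gamma> lam Q2 i
      = \<gamma> * (\<Sum>s'\<in>UNIV. P s a s' * (L Q1 s' - L Q2 s'))"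
    by (simp add: i soft_bellman_apply L_def right_diff_distrib sum_subtractf)
  have "\<bar>\<Sum>s'\<in>UNIV. P s a s' * (L Q1 s' - L Q2 s')\<bar> \<le> (\<Sum>s'\<in>UNIV. P s a s' * K)"
    using P_nonneg L by (intro order_trans[OF sum_abs] sum_mono) (simp add: abs_mult mult_left_mono)
  also have "\<dots> = K"
    using P_sum by (simp add: sum_distrib_right[symmetric])
  finally show ?thesis
    using \<open>0 \<le> \<gamma>\<close> by (simp add: diff abs_mult mult_left_mono)
qed

lemma gamma_pw_lower_bound:
  fixes w :: "'i::finite \<Rightarrow> real"
  assumes w: "\<And>i. w i > 0" and ws: "(\<Sum>i\<in>UNIV. w i) = 1" and "0 \<le> \<gamma>" "0 < p"
  shows "\<gamma> * (1 / Min (range w)) powr (1 / p) \<le> gamma_pw \<gamma> p w"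
proof -
  define m M where "m = Min (range w)" and "M = Max (range w)"
  have m: "0 < m" and M: "\<And>i. w i \<le> M"
    using w by (auto simp: m_def M_def)
  have "1 = (\<Sum>i\<in>UNIV. w i)"
    using ws by simp
  also have "\<dots> \<le> real CARD('i) * M"
    using sum_mono[of UNIV w "\<lambda>_. M"] M by simp
  finally have "(1 / m) powr (1 / p) \<le> (real CARD('i) * (M / m)) powr (1 / p)"
    using m \<open>0 < p\<close> by (intro powr_mono2) (auto simp: divide_right_mono)
  also have "\<dots> = real CARD('i) powr (1 / p) * (M / m) powr (1 / p)"
    by (rule powr_mult)
  finally show ?thesis
    using \<open>0 \<le> \<gamma>\<close> unfolding gamma_pw_def m_def M_def
    by (simp add: mult.assoc mult_left_mono)
qed

text \<open>The sup-norm is at most \<open>(1 / w_min) powr (1 / p)\<close> times the weighted \<open>p\<close>-norm, and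
  \<open>gamma_pw\<close> dominates \<open>\<gamma>\<close> times this factor because \<open>n * w_max \<ge> 1\<close>.\<close>

lemma soft_bellman_pw_contraction:
  fixes P :: "'s::finite \<Rightarrow> 'a::finite \<Rightarrow> 's \<Rightarrow> real"
    and w Q1 Q2 :: "'s \<times> 'a \<Rightarrow> real"
  assumes "\<And>s a s'. P s a s' \<ge> 0" "\<And>s a. (\<Sum>s'\<in>UNIV. P s a s') = 1"
    and "0 \<le> \<gamma>" "lam > 0"
    and w: "\<And>i. w i > 0" and ws: "(\<Sum>i\<in>UNIV. w i) = 1" and p: "0 < p"
  shows "pw_norm p w (\<lambda>i. soft_bellman P R \<gamma> lam Q1 i - soft_bellman P R \<gamma> lam Q2 i)
     \<le> gamma_pw \<gamma> p w * pw_norm p w (\<lambda>i. Q1 i - Q2 i)"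
proof -
  define K where "K = pw_norm p w (\<lambda>i. Q1 i - Q2 i) * (1 / Min (range w)) powr (1 / p)"
  have "\<bar>Q1 i - Q2 i\<bar> \<le> K" for i
    unfolding K_def using w p by (rule abs_le_pw_norm)
  then have "pw_norm p w (\<lambda>i. soft_bellman P R \<gamma> lam Q1 i - soft_bellman P R \<gamma> lam Q2 i) \<le> \<gamma> * K"
    using assms by (intro pw_norm_le_uniform_bound soft_bellman_dist_le) auto
  also have "\<dots> \<le> gamma_pw \<gamma> p w * pw_norm p w (\<lambda>i. Q1 i - Q2 i)"
    using mult_right_mono[OF gamma_pw_lower_bound[OF w ws \<open>0 \<le> \<gamma>\<close> p] pw_norm_nonneg]
    unfolding K_def by (simp add: ac_simps)
  finally show ?thesis .
qed

subsection \<open>Residual bounds and the main estimate\<close>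

lemma residual_le_dist_fixpoint:
  fixes F :: "('i::finite \<Rightarrow> real) \<Rightarrow> 'i \<Rightarrow> real"
  assumes "\<And>i. w i > 0" "1 \<le> p" and "F q = q"
    and contr: "pw_norm p w (\<lambda>i. F Q i - F q i) \<le> g * pw_norm p w (\<lambda>i. Q i - q i)"
  shows "pw_norm p w (\<lambda>i. F Q i - Q i) \<le> (1 + g) * pw_norm p w (\<lambda>i. Q i - q i)"
proof -
  have "pw_norm p w (\<lambda>i. F Q i - Q i) \<le> pw_norm p w (\<lambda>i. F Q i - q i) + pw_norm p w (\<lambda>i. q i - Q i)"
    by (rule pw_norm_diff_triangle[where w = w, OF assms(1,2)])
  then show ?thesis
    using contr \<open>F q = q\<close> by (simp add: pw_norm_minus_commute[of p w q] distrib_right)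
qed

lemma dist_fixpoint_le_residual:
  fixes F :: "('i::finite \<Rightarrow> real) \<Rightarrow> 'i \<Rightarrow> real"
  assumes "\<And>i. w i > 0" "1 \<le> p" and "F q = q"
    and contr: "pw_norm p w (\<lambda>i. F Q i - F q i) \<le> g * pw_norm p w (\<lambda>i. Q i - q i)"
  shows "(1 - g) * pw_norm p w (\<lambda>i. Q i - q i) \<le> pw_norm p w (\<lambda>i. F Q i - Q i)"
proof -
  have "pw_norm p w (\<lambda>i. Q i - q i) \<le> pw_norm p w (\<lambda>i. Q i - F Q i) + pw_norm p w (\<lambda>i. F Q i - q i)"
    by (rule pw_norm_diff_triangle[where w = w, OF assms(1,2)])
  then show ?thesis
    using contr \<open>F q = q\<close> by (simp add: pw_norm_minus_commute[of p w Q] left_diff_distrib)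
qed

lemma f_p_le_imp_residual_le:
  assumes "0 < p" "f_p P R \<gamma> lam p w \<Phi> \<theta>1 \<le> f_p P R \<gamma> lam p w \<Phi> \<theta>2"
  shows "pw_norm p w (\<lambda>i. soft_bellman P R \<gamma> lam (Qlin \<Phi> \<theta>1) i - Qlin \<Phi> \<theta>1 i)
    \<le> pw_norm p w (\<lambda>i. soft_bellman P R \<gamma> lam (Qlin \<Phi> \<theta>2) i - Qlin \<Phi> \<theta>2 i)"
proof (rule powr_le_cancel2)
  show "pw_norm p w (\<lambda>i. soft_bellman P R \<gamma> lam (Qlin \<Phi> \<theta>1) i - Qlin \<Phi> \<theta>1 i) powr p
    \<le> pw_norm p w (\<lambda>i. soft_bellman P R \<gamma> lam (Qlin \<Phi> \<theta>2) i - Qlin \<Phi> \<theta>2 i) powr p"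
    using assms by (simp add: f_p_def divide_le_cancel)
qed (use assms in \<open>simp_all add: pw_norm_nonneg\<close>)

theorem theorem2:
  fixes P :: "'s::finite \<Rightarrow> 'a::finite \<Rightarrow> 's \<Rightarrow> real"
    and R :: "'s \<Rightarrow> 'a \<Rightarrow> real"
    and \<gamma> lam p :: real
    and w :: "'s \<times> 'a \<Rightarrow> real"
    and \<Phi> :: "'s \<times> 'a \<Rightarrow> 'd::finite \<Rightarrow> real"
    and Qstar :: "'s \<times> 'a \<Rightarrow> real"
    and \<theta>bar \<theta>p :: "'d \<Rightarrow> real"
  assumes P_nonneg: "\<And>s a s'. P s a s' \<ge> 0"
    and P_sum: "\<And>s a. (\<Sum>s'\<in>UNIV. P s a s') = 1"
    and gamma: "0 \<le> \<gamma>" "\<gamma> < 1"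
    and lambda: "lam > 0"
    and w_pos: "\<And>i. w i > 0"
    and w_sum: "(\<Sum>i\<in>UNIV. w i) = 1"
    and full_rank: "inj (Qlin \<Phi>)"
    and p: "1 < p"
    and contr: "gamma_pw \<gamma> p w < 1"
    and fixpt: "soft_bellman P R \<gamma> lam Qstar = Qstar"
    and \<theta>bar_min: "\<And>\<theta>. pw_norm p w (\<lambda>i. Qlin \<Phi> \<theta>bar i - Qstar i)
                           \<le> pw_norm p w (\<lambda>i. Qlin \<Phi> \<theta> i - Qstar i)"
    and \<theta>p_min: "\<And>\<theta>. f_p P R \<gamma> lam p w \<Phi> \<theta>p \<le> f_p P R \<gamma> lam p w \<Phi> \<theta>"
  shows "pw_norm p w (\<lambda>i. Qlin \<Phi> \<theta>bar i - Qlin \<Phi> \<theta>p i)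
           \<le> (1 + (1 + gamma_pw \<gamma> p w) / (1 - gamma_pw \<gamma> p w))
              * (INF \<theta>. pw_norm p w (\<lambda>i. Qlin \<Phi> \<theta> i - Qstar i))"
proof -
  define g where "g = gamma_pw \<gamma> p w"
  define E where "E \<theta> = pw_norm p w (\<lambda>i. Qlin \<Phi> \<theta> i - Qstar i)" for \<theta>
  define res where
    "res \<theta> = pw_norm p w (\<lambda>i. soft_bellman P R \<gamma> lam (Qlin \<Phi> \<theta>) i - Qlin \<Phi> \<theta> i)" for \<theta>
  have contraction: "pw_norm p w (\<lambda>i. soft_bellman P R \<gamma> lam Q i - soft_bellman P R \<gamma> lam Qstar i)
      \<le> g * pw_norm p w (\<lambda>i. Q i - Qstar i)" for Q
    unfolding g_def using P_nonneg P_sum gamma lambda w_pos w_sum p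
    by (intro soft_bellman_pw_contraction) auto
  have "(1 - g) * E \<theta>p \<le> res \<theta>p"
    unfolding E_def res_def using w_pos p fixpt contraction by (intro dist_fixpoint_le_residual) auto
  also have "\<dots> \<le> res \<theta>bar"
    unfolding res_def using p \<theta>p_min by (intro f_p_le_imp_residual_le) auto
  also have "\<dots> \<le> (1 + g) * E \<theta>bar"
    unfolding E_def res_def using w_pos p fixpt contraction by (intro residual_le_dist_fixpoint) auto
  finally have E_\<theta>p: "E \<theta>p \<le> (1 + g) / (1 - g) * E \<theta>bar"
    using contr unfolding g_def[symmetric] by (simp add: pos_le_divide_eq mult.commute)
  have "pw_norm p w (\<lambda>i. Qlin \<Phi> \<theta>bar i - Qlin \<Phi> \<theta>p i) \<le> E \<theta>bar + E \<theta>p"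
    unfolding E_def using pw_norm_diff_triangle[where w = w and y = Qstar, OF w_pos less_imp_le[OF p]]
    by (simp add: pw_norm_minus_commute[of p w Qstar])
  also have "\<dots> \<le> (1 + (1 + g) / (1 - g)) * E \<theta>bar"
    using E_\<theta>p by (simp add: distrib_right)
  also have "E \<theta>bar = (INF \<theta>. E \<theta>)"
    unfolding E_def by (rule cInf_eq_minimum[symmetric]) (auto intro: \<theta>bar_min)
  finally show ?thesis
    unfolding g_def E_def .
qed

end
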